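(* Let $n$ be a positive odd integer and let $s$ be an integer with $0\leqslant s\leqslant (n-1)/2$. Then $$ \sum_{k=0}^{(n-1)/2}\frac{(aq;q^2)_k\,(q/a;q^2)_{k+s}}{(q^2;q^2)_k\,(q^2;q^2)_{k+s} } \equiv (-1)^{(n-1)/2}q^{(1-n^2)/4}\pmod{(1-aq^n)(a-q^n)}. $$
   Context: $a,q$ are indeterminates. The $q$-shifted factorial is $(y;q)_0=1$ and $(y;q)_m=(1-y)(1-yq)\cdots(1-yq^{m-1})$ for $m\geqslant1$. For rational functions $A,B$ and a polynomial $P$, $A\equiv B\pmod P$ means $A-B=P\cdot C/D$ for polynomials $C,D$ with $D$ coprime to $P$. *)

theory Defs
  imports "HOL-Computational_Algebra.Computational_Algebra"
begin

text \<open>Bivariate polynomials Q[q][a]: outer variable a, coefficients are polynomials in q.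
  Rational functions in a, q are elements of the fraction field.\<close>

type_synonym bipoly = "rat poly poly"
type_synonym ratfun = "bipoly fract"

definition var_a :: bipoly where "var_a = [:0, 1:]"
definition var_q :: bipoly where "var_q = [:[:0, 1:]:]"

definition fa :: ratfun where "fa = Fract var_a 1"
definition fq :: ratfun where "fq = Fract var_q 1"

definition qpoch :: "'a::comm_ring_1 \<Rightarrow> 'a \<Rightarrow> nat \<Rightarrow> 'a" where
  "qpoch y p m = (\<Prod>j<m. 1 - y * p ^ j)"

definition ratfun_cong :: "ratfun \<Rightarrow> ratfun \<Rightarrow> bipoly \<Rightarrow> bool" where
  "ratfun_cong A B P \<longleftrightarrow> (\<exists>C D. D \<noteq> 0 \<and> coprime D P \<and> A - B = Fract (P * C) D)"

end

theory Submission
  imports Defs "HOL-Computational_Algebra.Field_as_Ring"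
begin

text \<open>Put \<open>p = q^2\<close> and \<open>n = 2m + 1\<close>. At the two roots \<open>a = q^n\<close> and \<open>a = q^{-n}\<close> of the
  modulus the bases \<open>a q\<close> and \<open>q / a\<close> become \<open>p^{m+1}\<close> and \<open>p^{-m}\<close>, in one order or the
  other, so the sum terminates. A telescoping (Wilf--Zeilberger) argument shows that it does not
  depend on \<open>s\<close>, and at the extreme admissible \<open>s\<close> a single term survives:
  \<open>(p^{-m};p)_m / (p;p)_m = (-1)^m q^{-m(m+1)}\<close>. So the difference of the two sides, written as
  \<open>N / D\<close> with \<open>D\<close> coprime to the modulus and non-vanishing at both roots, has a numerator
  vanishing at both roots, and by Gauss's lemma the primitive modulus divides \<open>N\<close>.\<close>

section \<open>Terminating \<open>q\<close>-sums\<close>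

lemma qpoch_0 [simp]: "qpoch y p 0 = 1"
  by (simp add: qpoch_def)

lemma qpoch_Suc: "qpoch y p (Suc m) = qpoch y p m * (1 - y * p ^ m)"
  by (simp add: qpoch_def)

lemma qpoch_eq_0:
  assumes "j < m" "y * p ^ j = 1"
  shows "qpoch y p m = 0"
  unfolding qpoch_def using assms by (intro prod_zero) auto

lemma qpoch_hom:
  assumes mult: "\<And>x y. h (x * y) = h x * h y" and diff: "\<And>x y. h (x - y) = h x - h y"
    and one: "h 1 = 1"
  shows "h (qpoch y p k) = qpoch (h y) (h p) k"
proof -
  have "h (p ^ j) = h p ^ j" for j
    by (induction j) (simp_all add: mult one)
  then show ?thesis
    by (induction k) (simp_all add: qpoch_Suc mult diff one)
qed

definition qpoch_quot :: "'a::field \<Rightarrow> 'a \<Rightarrow> nat \<Rightarrow> 'a" where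
  "qpoch_quot y p k = qpoch y p k / qpoch p p k"

lemma qpoch_quot_eq_0: "j < k \<Longrightarrow> y * p ^ j = 1 \<Longrightarrow> qpoch_quot y p k = 0"
  by (simp add: qpoch_quot_def qpoch_eq_0)

lemma qpoch_quot_inverse_power_eq_0:
  assumes "p \<noteq> 0" "m < k"
  shows "qpoch_quot (inverse (p ^ m)) p k = 0"
  using assms by (intro qpoch_quot_eq_0[of m]) auto

locale q_nonroot =
  fixes p :: "'a::field"
  assumes power_Suc_neq_1: "p ^ Suc i \<noteq> 1"
begin

lemma qpoch_self_neq_0: "qpoch p p k \<noteq> 0"
  using power_Suc_neq_1 by (simp add: qpoch_def flip: power_Suc)

lemma qpoch_quot_Suc:
  "qpoch_quot y p (Suc k) = qpoch_quot y p k * (1 - y * p ^ k) / (1 - p ^ Suc k)"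
  using power_Suc_neq_1[of k] qpoch_self_neq_0[of k] by (simp add: qpoch_quot_def qpoch_Suc)

text \<open>A Wilf--Zeilberger certificate: for \<open>x y = p\<close> the change of the summand under
  \<open>t \<mapsto> t + 1\<close> telescopes in \<open>k\<close>.\<close>
lemma sum_qpoch_quot_shift:
  assumes xy: "x * y = p"
    and nondeg: "1 - x + p ^ t * (p - y) \<noteq> 0"
    and terminates: "qpoch_quot x p (Suc M) * qpoch_quot y p (Suc M + t) = 0"
  shows "(\<Sum>k=0..M. qpoch_quot x p k * qpoch_quot y p (k + Suc t))
       = (\<Sum>k=0..M. qpoch_quot x p k * qpoch_quot y p (k + t))"
proof -
  define X where "X = qpoch_quot x p"
  define Y where "Y = qpoch_quot y p"
  define \<mu> where "\<mu> = p ^ t * (p - y) / (1 - x + p ^ t * (p - y))"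
  define G where "G k = \<mu> * (1 - p ^ k) * (X k * Y (k + t))" for k
  have step: "X k * Y (k + Suc t) - X k * Y (k + t) = G (Suc k) - G k" for k
  proof -
    define j where "j = k + t"
    define w where "w = 1 - p ^ Suc j"
    have w: "w \<noteq> 0" and u: "1 - p ^ Suc k \<noteq> 0"
      using power_Suc_neq_1 unfolding w_def by auto
    have bracket: "(1 - x * p ^ k) * (1 - y * p ^ j) - (1 - p ^ k) * w
        = p ^ k * (1 - x + p ^ t * (p - y))"
    proof -
      have "x * p ^ k * (y * p ^ j) = p ^ k * p ^ Suc j"
        using xy by (simp add: j_def power_add algebra_simps)
      then show ?thesis by (simp add: w_def j_def algebra_simps power_add)
    qed
    have X_Suc: "(1 - p ^ Suc k) * X (Suc k) = X k * (1 - x * p ^ k)"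
      using u by (simp add: X_def qpoch_quot_Suc)
    have Y_Suc: "Y (Suc j) = Y j * (1 - y * p ^ j) / w"
      by (simp add: Y_def qpoch_quot_Suc w_def)
    have "G (Suc k) = \<mu> * ((1 - p ^ Suc k) * X (Suc k)) * Y (Suc j)"
      by (simp add: G_def j_def)
    also have "\<dots> = \<mu> * (X k * (1 - x * p ^ k)) * (Y j * (1 - y * p ^ j) / w)"
      by (simp only: X_Suc Y_Suc)
    finally have "G (Suc k) - G k = \<mu> * X k * Y j * ((1 - x * p ^ k) * (1 - y * p ^ j) / w - (1 - p ^ k))"
      by (simp add: G_def j_def algebra_simps)
    also have "(1 - x * p ^ k) * (1 - y * p ^ j) / w - (1 - p ^ k) = p ^ k * (1 - x + p ^ t * (p - y)) / w"
      unfolding bracket[symmetric] using w by (simp add: diff_divide_distrib)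
    also have "\<mu> * X k * Y j * (p ^ k * (1 - x + p ^ t * (p - y)) / w)
        = X k * Y j * (\<mu> * (1 - x + p ^ t * (p - y)) * p ^ k / w)"
      by (simp add: ac_simps)
    also have "\<mu> * (1 - x + p ^ t * (p - y)) = p ^ t * (p - y)"
      using nondeg by (simp add: \<mu>_def)
    also have "p ^ t * (p - y) * p ^ k / w = (1 - y * p ^ j) / w - 1"
      using w by (simp add: w_def j_def field_simps power_add)
    also have "X k * Y j * ((1 - y * p ^ j) / w - 1) = X k * Y (Suc j) - X k * Y j"
      by (simp add: Y_Suc algebra_simps)
    finally show ?thesis by (simp add: j_def)
  qed
  have "(\<Sum>k=0..M. X k * Y (k + Suc t)) - (\<Sum>k=0..M. X k * Y (k + t)) = (\<Sum>k=0..M. G (Suc k) - G k)"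
    by (simp only: step flip: sum_subtractf)
  also have "\<dots> = G (Suc M) - G 0"
    by (rule sum_Suc_diff) simp
  also have "\<dots> = 0"
    using terminates by (simp add: G_def X_def Y_def)
  finally show ?thesis by (simp add: X_def Y_def)
qed

lemma sum_qpoch_quot_power_inverse_power:
  assumes p: "p \<noteq> 0" and "s \<le> m"
  shows "(\<Sum>k=0..m. qpoch_quot (p ^ Suc m) p k * qpoch_quot (inverse (p ^ m)) p (k + s))
       = qpoch_quot (inverse (p ^ m)) p m"
  using \<open>s \<le> m\<close>
proof (induction "m - s" arbitrary: s)
  case 0
  then have "s = m" by simp
  have "(\<Sum>k=0..m. qpoch_quot (p ^ Suc m) p k * qpoch_quot (inverse (p ^ m)) p (k + m))
      = (\<Sum>k\<in>{0}. qpoch_quot (p ^ Suc m) p k * qpoch_quot (inverse (p ^ m)) p (k + m))"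
    using p by (intro sum.mono_neutral_right) (auto simp: qpoch_quot_inverse_power_eq_0)
  then show ?case using \<open>s = m\<close> by (simp add: qpoch_quot_def)
next
  case (Suc d)
  then have "s < m" by simp
  have "p ^ m \<noteq> p ^ s"
  proof
    assume "p ^ m = p ^ s"
    moreover have "p ^ m = p ^ s * p ^ Suc (m - Suc s)"
      using \<open>s < m\<close> by (simp only: power_add[symmetric]) simp
    ultimately show False using p power_Suc_neq_1 by simp
  qed
  moreover have "p ^ m * (1 - p ^ Suc m + p ^ s * (p - inverse (p ^ m))) = (p ^ m - p ^ s) * (1 - p ^ Suc m)"
    using p by (simp add: field_simps)
  ultimately have "1 - p ^ Suc m + p ^ s * (p - inverse (p ^ m)) \<noteq> 0"
    using power_Suc_neq_1[of m] by auto
  then have "(\<Sum>k=0..m. qpoch_quot (p ^ Suc m) p k * qpoch_quot (inverse (p ^ m)) p (k + Suc s))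
      = (\<Sum>k=0..m. qpoch_quot (p ^ Suc m) p k * qpoch_quot (inverse (p ^ m)) p (k + s))"
    using p by (intro sum_qpoch_quot_shift) (simp_all add: qpoch_quot_inverse_power_eq_0)
  with Suc.hyps(1)[of "Suc s"] Suc.hyps(2) \<open>s < m\<close> show ?case by simp
qed

lemma sum_qpoch_quot_inverse_power_power:
  assumes p: "p \<noteq> 0" and "s \<le> m"
  shows "(\<Sum>k=0..m. qpoch_quot (inverse (p ^ m)) p k * qpoch_quot (p ^ Suc m) p (k + s))
       = qpoch_quot (inverse (p ^ m)) p m"
  using \<open>s \<le> m\<close>
proof (induction s)
  case 0
  then show ?case
    using sum_qpoch_quot_power_inverse_power[OF p, of 0 m] by (simp add: mult.commute)
next
  case (Suc s)
  have "p ^ m \<noteq> 1"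
    using power_Suc_neq_1[of "m - 1"] Suc.prems by (cases m) auto
  moreover have "p ^ (s + m + 1) \<noteq> 1"
    using power_Suc_neq_1 by simp
  moreover have "p ^ m * (1 - inverse (p ^ m) + p ^ s * (p - p ^ Suc m)) = (p ^ m - 1) * (1 - p ^ (s + m + 1))"
    using p by (simp add: field_simps power_add)
  ultimately have "1 - inverse (p ^ m) + p ^ s * (p - p ^ Suc m) \<noteq> 0"
    by auto
  then have "(\<Sum>k=0..m. qpoch_quot (inverse (p ^ m)) p k * qpoch_quot (p ^ Suc m) p (k + Suc s))
      = (\<Sum>k=0..m. qpoch_quot (inverse (p ^ m)) p k * qpoch_quot (p ^ Suc m) p (k + s))"
    using p by (intro sum_qpoch_quot_shift) (simp_all add: qpoch_quot_inverse_power_eq_0)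
  with Suc show ?case by simp
qed

lemma qpoch_quot_inverse_power_self:
  assumes p: "p \<noteq> 0"
  shows "qpoch_quot (inverse (p ^ m)) p m = (\<Prod>i<m. - inverse (p ^ Suc i))"
proof -
  have "qpoch (inverse (p ^ m)) p m = (\<Prod>i<m. 1 - inverse (p ^ m) * p ^ (m - Suc i))"
    unfolding qpoch_def by (rule prod.reindex_bij_witness[of _ "\<lambda>i. m - Suc i" "\<lambda>i. m - Suc i"]) auto
  also have "\<dots> = (\<Prod>i<m. - inverse (p ^ Suc i) * (1 - p * p ^ i))"
  proof (intro prod.cong refl)
    fix i assume "i \<in> {..<m}"
    then have "p ^ m = p ^ (m - Suc i) * p ^ Suc i"
      by (simp only: power_add[symmetric]) simp
    then show "1 - inverse (p ^ m) * p ^ (m - Suc i) = - inverse (p ^ Suc i) * (1 - p * p ^ i)"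
      using p by (simp add: field_simps)
  qed
  also have "\<dots> = (\<Prod>i<m. - inverse (p ^ Suc i)) * qpoch p p m"
    unfolding qpoch_def by (rule prod.distrib)
  finally show ?thesis
    using qpoch_self_neq_0 by (simp add: qpoch_quot_def)
qed

end

definition q_summand :: "'a::field \<Rightarrow> 'a \<Rightarrow> nat \<Rightarrow> nat \<Rightarrow> 'a" where
  "q_summand a q s k = qpoch (a * q) (q ^ 2) k * qpoch (q / a) (q ^ 2) (k + s) /
     (qpoch (q ^ 2) (q ^ 2) k * qpoch (q ^ 2) (q ^ 2) (k + s))"

lemma prod_neg_inverse_square_powers:
  fixes q :: "'a::field"
  shows "(\<Prod>i<m. - inverse ((q ^ 2) ^ Suc i)) = (-1) ^ m * inverse (q ^ (m * (m + 1)))"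
proof (induction m)
  case (Suc m)
  have "m * (m + 1) + 2 * Suc m = Suc m * (Suc m + 1)"
    by simp
  then have "q ^ (Suc m * (Suc m + 1)) = q ^ (m * (m + 1)) * (q ^ 2) ^ Suc m"
    by (metis power_add power_mult)
  with Suc.IH show ?case
    by (simp add: inverse_mult_distrib)
qed simp

lemma sum_q_summand_at_root:
  fixes q :: "'a::field"
  assumes q: "q \<noteq> 0" "q_nonroot (q ^ 2)" and a: "a = q ^ (2 * m + 1) \<or> a = inverse (q ^ (2 * m + 1))"
    and "s \<le> m"
  shows "(\<Sum>k=0..m. q_summand a q s k) = (-1) ^ m * inverse (q ^ (m * (m + 1)))"
proof -
  define p where "p = q ^ 2"
  interpret q_nonroot p unfolding p_def by (rule q(2))
  have p: "p \<noteq> 0" "q * q = p" "q \<noteq> 0"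
    using q(1) by (simp_all add: p_def power2_eq_square)
  have power_n: "q ^ (2 * m + 1) = p ^ m * q"
    by (simp add: p_def power_mult)
  have summand: "q_summand a q s k = qpoch_quot (a * q) p k * qpoch_quot (q / a) p (k + s)" for k
    by (simp add: q_summand_def qpoch_quot_def p_def)
  have "(\<Sum>k=0..m. q_summand a q s k) = qpoch_quot (inverse (p ^ m)) p m"
    using a
  proof
    assume "a = q ^ (2 * m + 1)"
    then have "a = p ^ m * q"
      by (simp only: power_n)
    then have "a * q = p ^ Suc m" "q / a = inverse (p ^ m)"
      using p by (simp_all add: mult.assoc power_Suc2 divide_inverse)
    then show ?thesis
      using sum_qpoch_quot_power_inverse_power[OF p(1) \<open>s \<le> m\<close>] by (simp add: summand)
  next
    assume "a = inverse (q ^ (2 * m + 1))"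
    then have "a = inverse (p ^ m * q)"
      by (simp only: power_n)
    then have "a * q = inverse (p ^ m)" "q / a = q * (p ^ m * q)"
      using p(3) by (simp_all add: inverse_mult_distrib divide_inverse)
    then have "a * q = inverse (p ^ m)" "q / a = p ^ Suc m"
      using p(2) by (simp_all add: ac_simps)
    then show ?thesis
      using sum_qpoch_quot_inverse_power_power[OF p(1) \<open>s \<le> m\<close>] by (simp add: summand)
  qed
  also have "\<dots> = (\<Prod>i<m. - inverse (p ^ Suc i))"
    by (rule qpoch_quot_inverse_power_self[OF p(1)])
  also have "\<dots> = (-1) ^ m * inverse (q ^ (m * (m + 1)))"
    unfolding p_def by (rule prod_neg_inverse_square_powers)
  finally show ?thesis .
qed

section \<open>Values of rational functions at a point\<close>

definition regular_denom ::
    "'a::{factorial_ring_gcd,semiring_gcd_mult_normalize} poly \<Rightarrow> 'a fract \<Rightarrow> 'a poly \<Rightarrow> bool" where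
  "regular_denom P r D \<longleftrightarrow> D \<noteq> 0 \<and> coprime D P \<and> poly (fract_poly D) r \<noteq> 0"

text \<open>The value is carried along as a witness rather than defined, which avoids proving that it
  does not depend on the chosen representation.\<close>
definition has_value ::
    "'a::{factorial_ring_gcd,semiring_gcd_mult_normalize} poly \<Rightarrow> 'a fract \<Rightarrow> 'a poly fract \<Rightarrow> 'a fract \<Rightarrow> bool"
  where
  "has_value P r X v \<longleftrightarrow> (\<exists>N D. regular_denom P r D \<and> X = Fract N D \<and>
     v = poly (fract_poly N) r / poly (fract_poly D) r)"

lemma regular_denom_1 [simp]: "regular_denom P r 1"
  by (simp add: regular_denom_def)

lemma regular_denom_mult: "regular_denom P r D \<Longrightarrow> regular_denom P r E \<Longrightarrow> regular_denom P r (D * E)"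
  by (simp add: regular_denom_def)

lemma has_value_Fract:
  "regular_denom P r D \<Longrightarrow> has_value P r (Fract N D) (poly (fract_poly N) r / poly (fract_poly D) r)"
  unfolding has_value_def by blast

lemma has_value_to_fract: "has_value P r (to_fract N) (poly (fract_poly N) r)"
  using has_value_Fract[OF regular_denom_1] by (simp add: to_fract_def)

lemma has_value_inverse_to_fract:
  "regular_denom P r D \<Longrightarrow> has_value P r (inverse (to_fract D)) (inverse (poly (fract_poly D) r))"
  using has_value_Fract[of P r D 1] by (simp add: to_fract_def regular_denom_def divide_inverse)

lemma has_value_1: "has_value P r 1 1"
  using has_value_to_fract[of P r 1] by simp

lemma has_value_add:
  assumes "has_value P r X v" "has_value P r Y w"
  shows "has_value P r (X + Y) (v + w)"
proof -
  obtain N D where D: "regular_denom P r D" and "X = Fract N D"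
    and "v = poly (fract_poly N) r / poly (fract_poly D) r"
    using assms(1) unfolding has_value_def by blast
  moreover obtain N' D' where D': "regular_denom P r D'" and "Y = Fract N' D'"
    and "w = poly (fract_poly N') r / poly (fract_poly D') r"
    using assms(2) unfolding has_value_def by blast
  moreover have "D \<noteq> 0" "D' \<noteq> 0" "poly (fract_poly D) r \<noteq> 0" "poly (fract_poly D') r \<noteq> 0"
    using D D' by (auto simp: regular_denom_def)
  ultimately have "X + Y = Fract (N * D' + N' * D) (D * D')"
    and "v + w = poly (fract_poly (N * D' + N' * D)) r / poly (fract_poly (D * D')) r"
    by (simp_all add: add_frac_eq)
  then show ?thesis
    by (metis has_value_Fract regular_denom_mult D D')
qed

lemma has_value_mult:
  assumes "has_value P r X v" "has_value P r Y w"
  shows "has_value P r (X * Y) (v * w)"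
proof -
  obtain N D where D: "regular_denom P r D" and "X = Fract N D"
    and "v = poly (fract_poly N) r / poly (fract_poly D) r"
    using assms(1) unfolding has_value_def by blast
  moreover obtain N' D' where D': "regular_denom P r D'" and "Y = Fract N' D'"
    and "w = poly (fract_poly N') r / poly (fract_poly D') r"
    using assms(2) unfolding has_value_def by blast
  ultimately show ?thesis
    using has_value_Fract[OF regular_denom_mult[OF D D'], of "N * N'"] by simp
qed

lemma has_value_uminus:
  assumes "has_value P r X v"
  shows "has_value P r (- X) (- v)"
proof -
  obtain N D where D: "regular_denom P r D" and "X = Fract N D"
    and "v = poly (fract_poly N) r / poly (fract_poly D) r"
    using assms unfolding has_value_def by blast
  then show ?thesis
    using has_value_Fract[OF D, of "- N"] by (simp add: fract_poly_diff[of 0, simplified])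
qed

lemma has_value_diff:
  "has_value P r X v \<Longrightarrow> has_value P r Y w \<Longrightarrow> has_value P r (X - Y) (v - w)"
  using has_value_add[OF _ has_value_uminus] by fastforce

lemma has_value_divide:
  "has_value P r X v \<Longrightarrow> has_value P r (inverse Y) (inverse w) \<Longrightarrow> has_value P r (X / Y) (v / w)"
  using has_value_mult by (fastforce simp: divide_inverse)

lemma has_value_sum:
  "finite A \<Longrightarrow> (\<And>k. k \<in> A \<Longrightarrow> has_value P r (X k) (v k)) \<Longrightarrow>
    has_value P r (\<Sum>k\<in>A. X k) (\<Sum>k\<in>A. v k)"
  by (induction A rule: finite_induct)
    (simp_all add: has_value_add has_value_to_fract[of P r 0, simplified])

lemma has_value_prod:
  "finite A \<Longrightarrow> (\<And>k. k \<in> A \<Longrightarrow> has_value P r (X k) (v k)) \<Longrightarrow>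
    has_value P r (\<Prod>k\<in>A. X k) (\<Prod>k\<in>A. v k)"
  by (induction A rule: finite_induct) (simp_all add: has_value_mult has_value_1)

lemma has_value_power: "has_value P r X v \<Longrightarrow> has_value P r (X ^ k) (v ^ k)"
  using has_value_prod[of "{..<k}" P r "\<lambda>_. X" "\<lambda>_. v"] by simp

lemma has_value_power_int:
  "has_value P r X v \<Longrightarrow> has_value P r (inverse X) (inverse v) \<Longrightarrow> has_value P r (X powi e) (v powi e)"
  by (simp add: power_int_def has_value_power)

lemma has_value_qpoch:
  "has_value P r X v \<Longrightarrow> has_value P r Y w \<Longrightarrow> has_value P r (qpoch X Y k) (qpoch v w k)"
  unfolding qpoch_def
  by (intro has_value_prod has_value_diff has_value_1 has_value_mult has_value_power) simp

text \<open>Two representations of the same fraction are compared by cross-multiplication, so the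
  numerator of the representation valid at \<open>\<alpha>\<close> also vanishes at \<open>\<beta>\<close>.\<close>
lemma has_value_0_at_two_points:
  assumes "has_value P \<alpha> X 0" "has_value P \<beta> X 0"
  obtains N D where "D \<noteq> 0" "coprime D P" "X = Fract N D"
    "poly (fract_poly N) \<alpha> = 0" "poly (fract_poly N) \<beta> = 0"
proof -
  obtain N D where D: "regular_denom P \<alpha> D" and X: "X = Fract N D"
    and "0 = poly (fract_poly N) \<alpha> / poly (fract_poly D) \<alpha>"
    using assms(1) unfolding has_value_def by blast
  then have N_\<alpha>: "poly (fract_poly N) \<alpha> = 0"
    by (simp add: regular_denom_def)
  obtain N' D' where D': "regular_denom P \<beta> D'" and X': "X = Fract N' D'"
    and "0 = poly (fract_poly N') \<beta> / poly (fract_poly D') \<beta>"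
    using assms(2) unfolding has_value_def by blast
  then have "poly (fract_poly N') \<beta> = 0"
    by (simp add: regular_denom_def)
  moreover have "N * D' = N' * D"
    using X X' D D' by (simp add: regular_denom_def eq_fract)
  then have "poly (fract_poly N) \<beta> * poly (fract_poly D') \<beta> = poly (fract_poly N') \<beta> * poly (fract_poly D) \<beta>"
    by (metis fract_poly_mult poly_mult)
  ultimately have "poly (fract_poly N) \<beta> = 0"
    using D' by (simp add: regular_denom_def)
  with D X N_\<alpha> show ?thesis
    by (intro that) (simp_all add: regular_denom_def)
qed

lemma linear_factors_dvd:
  fixes f :: "'a::field poly"
  assumes "poly f \<alpha> = 0" "poly f \<beta> = 0" "\<alpha> \<noteq> \<beta>"
  shows "[:- \<alpha>, 1:] * [:- \<beta>, 1:] dvd f"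
proof -
  obtain g where g: "f = [:- \<alpha>, 1:] * g"
    using assms(1) by (auto simp: poly_eq_0_iff_dvd elim: dvdE)
  then have "poly g \<beta> = 0"
    using assms(2,3) by simp
  then have "[:- \<beta>, 1:] dvd g"
    by (simp add: poly_eq_0_iff_dvd)
  then show ?thesis
    unfolding g by (rule mult_dvd_mono[OF dvd_refl])
qed

lemma eq_Fract_mult_if_has_value_0:
  assumes P: "content P = 1" "fract_poly P = smult c ([:- \<alpha>, 1:] * [:- \<beta>, 1:])" "\<alpha> \<noteq> \<beta>"
    and "has_value P \<alpha> X 0" "has_value P \<beta> X 0"
  shows "\<exists>C D. D \<noteq> 0 \<and> coprime D P \<and> X = Fract (P * C) D"
proof -
  obtain N D where ND: "D \<noteq> 0" "coprime D P" "X = Fract N D"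
    and roots: "poly (fract_poly N) \<alpha> = 0" "poly (fract_poly N) \<beta> = 0"
    using has_value_0_at_two_points[OF assms(4,5)] .
  have "c \<noteq> 0"
    using P(1,2) by auto
  moreover have "[:- \<alpha>, 1:] * [:- \<beta>, 1:] dvd fract_poly N"
    using roots P(3) by (rule linear_factors_dvd)
  ultimately have "fract_poly P dvd fract_poly N"
    unfolding P(2) by (intro smult_dvd)
  then obtain C where "N = P * C"
    using P(1) by (auto dest: fract_poly_dvdD elim: dvdE)
  with ND show ?thesis
    by blast
qed

section \<open>The modulus \<open>(1 - a q^n) (a - q^n)\<close>\<close>

lemma to_fract_power: "to_fract (x ^ k) = to_fract x ^ k"
  by (induction k) simp_all

lemma content_eq_1_if_coeff_eq_1:
  fixes f :: "'a::semiring_gcd poly"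
  assumes "coeff f i = 1"
  shows "content f = 1"
proof -
  have "is_unit (content f)"
    using content_dvd_coeff[of f i] assms by simp
  then show ?thesis
    using normalize_content[of f] by (simp add: is_unit_normalize)
qed

lemma coprime_const_poly_if_content_eq_1:
  fixes f :: "'a::{factorial_ring_gcd,semiring_gcd_mult_normalize} poly"
  assumes "c \<noteq> 0" "content f = 1"
  shows "coprime [:c:] f"
proof (rule coprimeI)
  fix d assume d: "d dvd [:c:]" "d dvd f"
  then have "degree d = 0"
    using assms(1) dvd_imp_degree_le[of d "[:c:]"] by simp
  then obtain e where e: "d = [:e:]"
    using degree_0_id[symmetric] by blast
  then have "e dvd 1"
    using d(2) assms(2) by (simp add: const_poly_dvd_iff_dvd_content)
  then show "is_unit d"
    by (simp add: e is_unit_const_poly_iff)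
qed

abbreviation modulus :: "nat \<Rightarrow> bipoly" where
  "modulus n \<equiv> (1 - var_a * var_q ^ n) * (var_a - var_q ^ n)"

definition q_coeff :: "rat poly fract" where
  "q_coeff = to_fract [:0, 1:]"

lemma fa_eq: "fa = to_fract var_a"
  by (simp add: fa_def to_fract_def)

lemma fq_eq: "fq = to_fract [:[:0, 1:]:]"
  by (simp add: fq_def var_q_def to_fract_def)

lemma var_q_power: "var_q ^ n = [:[:0, 1:] ^ n:]"
  by (simp add: var_q_def poly_const_pow)

lemma poly_fract_poly_var_a [simp]: "poly (fract_poly var_a) r = r"
  by (simp add: var_a_def map_poly_pCons)

lemma poly_fract_poly_const [simp]: "poly (fract_poly [:c:]) r = to_fract c"
  by (cases "c = 0") (simp_all add: map_poly_pCons)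

lemma q_coeff_neq_0: "q_coeff \<noteq> 0"
  by (simp add: q_coeff_def)

lemma q_coeff_power: "q_coeff ^ k = to_fract ([:0, 1:] ^ k)"
  by (simp add: q_coeff_def to_fract_power)

lemma q_nonroot_q_coeff_square: "q_nonroot (q_coeff ^ 2)"
proof
  fix i
  have "[:0, 1::rat:] ^ (2 * Suc i) \<noteq> 1"
  proof
    assume "[:0, 1::rat:] ^ (2 * Suc i) = 1"
    then have "degree ([:0, 1::rat:] ^ (2 * Suc i)) = 0"
      by simp
    then show False
      by (simp add: degree_power_eq)
  qed
  moreover have "(q_coeff ^ 2) ^ Suc i = to_fract ([:0, 1:] ^ (2 * Suc i))"
    unfolding power_mult[symmetric] by (rule q_coeff_power)
  ultimately show "(q_coeff ^ 2) ^ Suc i \<noteq> 1"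
    by (simp flip: to_fract_1)
qed

lemma content_modulus: "content (modulus n) = 1"
proof -
  have "coeff (1 - var_a * var_q ^ n) 0 = 1" "coeff (var_a - var_q ^ n) 1 = 1"
    by (simp_all add: var_a_def var_q_power)
  then show ?thesis
    unfolding content_mult by (simp only: content_eq_1_if_coeff_eq_1 mult_1)
qed

lemma coprime_const_modulus: "c \<noteq> 0 \<Longrightarrow> coprime [:c:] (modulus n)"
  by (rule coprime_const_poly_if_content_eq_1[OF _ content_modulus])

lemma coprime_var_a_modulus: "coprime var_a (modulus n)"
proof -
  have "coprime var_a (1 - var_a * var_q ^ n)"
  proof (rule coprimeI)
    fix d assume "d dvd var_a" "d dvd 1 - var_a * var_q ^ n"
    then have "d dvd (1 - var_a * var_q ^ n) + var_a * var_q ^ n"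
      by (intro dvd_add dvd_mult2)
    then show "is_unit d"
      by simp
  qed
  moreover have "coprime var_a (var_a - var_q ^ n)"
  proof (rule coprimeI)
    fix d assume d: "d dvd var_a" "d dvd var_a - var_q ^ n"
    have "coprime [:[:0, 1::rat:] ^ n:] var_a"
      by (rule coprime_const_poly_if_content_eq_1) (simp_all add: var_a_def content_eq_1_if_coeff_eq_1[of _ 1])
    moreover have "d dvd [:[:0, 1:] ^ n:]"
      using dvd_diff[OF d] by (simp add: var_q_power)
    ultimately show "is_unit d"
      using d(1) by (rule coprime_common_divisor)
  qed
  ultimately show ?thesis
    by simp
qed

lemma fract_poly_modulus:
  "fract_poly (modulus n) = smult (- (q_coeff ^ n)) ([:- inverse (q_coeff ^ n), 1:] * [:- (q_coeff ^ n), 1:])"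
proof -
  have var_a: "fract_poly var_a = [:0, 1:]"
    by (simp add: var_a_def map_poly_pCons)
  have var_q: "fract_poly (var_q ^ n) = [:q_coeff ^ n:]"
    by (simp add: var_q_power q_coeff_power map_poly_pCons)
  have "fract_poly (1 - var_a * var_q ^ n) = [:1, - (q_coeff ^ n):]"
    by (simp only: fract_poly_diff fract_poly_mult fract_poly_1 var_a var_q) (simp add: one_pCons)
  also have "\<dots> = smult (- (q_coeff ^ n)) [:- inverse (q_coeff ^ n), 1:]"
    using q_coeff_neq_0 by simp
  moreover have "fract_poly (var_a - var_q ^ n) = [:- (q_coeff ^ n), 1:]"
    by (simp add: var_a var_q)
  ultimately show ?thesis
    by (simp only: fract_poly_mult mult_smult_left)
qed

lemma ratfun_cong_if_has_value_0:
  assumes "0 < n" and "has_value (modulus n) (q_coeff ^ n) (A - B) 0"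
    and "has_value (modulus n) (inverse (q_coeff ^ n)) (A - B) 0"
  shows "ratfun_cong A B (modulus n)"
proof -
  interpret q_nonroot "q_coeff ^ 2"
    by (rule q_nonroot_q_coeff_square)
  have "q_coeff ^ n * q_coeff ^ n \<noteq> 1"
    using power_Suc_neq_1[of "n - 1"] \<open>0 < n\<close> by (simp flip: power_mult power_add mult_2)
  then have "inverse (q_coeff ^ n) \<noteq> q_coeff ^ n"
    by (metis q_coeff_neq_0 power_not_zero right_inverse)
  then show ?thesis
    unfolding ratfun_cong_def
    by (rule eq_Fract_mult_if_has_value_0[OF content_modulus fract_poly_modulus _ assms(3,2)])
qed

lemma regular_denom_const:
  assumes "c \<noteq> 0"
  shows "regular_denom (modulus n) r [:c:]"
  using coprime_const_modulus[OF assms] assms by (simp add: regular_denom_def)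

lemma has_value_fa: "has_value P r fa r"
  using has_value_to_fract[of P r var_a] by (simp add: fa_eq)

lemma has_value_inverse_fa:
  assumes "r \<noteq> 0"
  shows "has_value (modulus n) r (inverse fa) (inverse r)"
proof -
  have "var_a \<noteq> 0"
    by (simp add: var_a_def)
  then have "regular_denom (modulus n) r var_a"
    using coprime_var_a_modulus[of n] assms by (simp add: regular_denom_def)
  then show ?thesis
    using has_value_inverse_to_fract by (fastforce simp: fa_eq)
qed

lemma has_value_fq: "has_value P r fq q_coeff"
  using has_value_to_fract[of P r "[:[:0, 1:]:]"] by (simp add: fq_eq q_coeff_def)

lemma has_value_inverse_fq: "has_value (modulus n) r (inverse fq) (inverse q_coeff)"
  using has_value_inverse_to_fract[OF regular_denom_const, of "[:0, 1:]"]
  by (simp add: fq_eq q_coeff_def)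

lemma has_value_inverse_qpoch_fq:
  "has_value (modulus n) r (inverse (qpoch (fq ^ 2) (fq ^ 2) k)) (inverse (qpoch (q_coeff ^ 2) (q_coeff ^ 2) k))"
proof -
  define c where "c = qpoch ([:0, 1:] ^ 2) ([:0, 1::rat:] ^ 2) k"
  have "to_fract [:[:0, 1:] ^ 2:] = fq ^ 2"
    by (simp add: fq_eq to_fract_power flip: poly_const_pow)
  moreover have "to_fract [:qpoch y p k:] = qpoch (to_fract [:y:]) (to_fract [:p:]) k" for y p :: "rat poly"
    by (rule qpoch_hom) (simp_all flip: to_fract_mult to_fract_diff one_pCons)
  ultimately have "qpoch (fq ^ 2) (fq ^ 2) k = to_fract [:c:]"
    by (simp add: c_def)
  moreover have "qpoch (q_coeff ^ 2) (q_coeff ^ 2) k = to_fract c"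
    using qpoch_hom[of to_fract, symmetric] by (simp add: c_def q_coeff_power)
  moreover have "c \<noteq> 0"
    using q_nonroot.qpoch_self_neq_0[OF q_nonroot_q_coeff_square] calculation(2) by auto
  ultimately show ?thesis
    using has_value_inverse_to_fract[OF regular_denom_const] by simp
qed

lemma has_value_q_summand:
  assumes "r \<noteq> 0"
  shows "has_value (modulus n) r (q_summand fa fq s k) (q_summand r q_coeff s k)"
proof -
  have "has_value (modulus n) r (inverse (qpoch (fq ^ 2) (fq ^ 2) k * qpoch (fq ^ 2) (fq ^ 2) (k + s)))
      (inverse (qpoch (q_coeff ^ 2) (q_coeff ^ 2) k * qpoch (q_coeff ^ 2) (q_coeff ^ 2) (k + s)))"
    unfolding inverse_mult_distrib by (intro has_value_mult has_value_inverse_qpoch_fq)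
  then show ?thesis
    unfolding q_summand_def
    by (intro has_value_divide has_value_mult has_value_qpoch has_value_power has_value_fa has_value_fq
        has_value_inverse_fa[OF assms])
qed

lemma has_value_0_at_root:
  assumes r: "r = q_coeff ^ (2 * m + 1) \<or> r = inverse (q_coeff ^ (2 * m + 1))" and "s \<le> m"
  shows "has_value (modulus (2 * m + 1)) r
    ((\<Sum>k=0..m. q_summand fa fq s k) - (-1) ^ m * fq powi - int (m * (m + 1))) 0"
proof -
  have "r \<noteq> 0"
    using r q_coeff_neq_0 by auto
  then have "has_value (modulus (2 * m + 1)) r (\<Sum>k=0..m. q_summand fa fq s k) (\<Sum>k=0..m. q_summand r q_coeff s k)"
    by (intro has_value_sum has_value_q_summand) simp_all
  moreover have "has_value (modulus (2 * m + 1)) r ((-1) ^ m * fq powi - int (m * (m + 1)))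
      ((-1) ^ m * q_coeff powi - int (m * (m + 1)))"
    by (intro has_value_mult has_value_power has_value_uminus has_value_1 has_value_power_int
        has_value_fq has_value_inverse_fq)
  moreover have "(\<Sum>k=0..m. q_summand r q_coeff s k) = (-1) ^ m * inverse (q_coeff ^ (m * (m + 1)))"
    using r \<open>s \<le> m\<close> by (rule sum_q_summand_at_root[OF q_coeff_neq_0 q_nonroot_q_coeff_square])
  moreover have "inverse (q_coeff ^ (m * (m + 1))) = q_coeff powi - int (m * (m + 1))"
    by (simp only: power_int_minus power_int_of_nat)
  ultimately show ?thesis
    using has_value_diff by fastforce
qed

theorem theorem4p4:
  fixes n s :: nat
  assumes "odd n" and "n > 0" and "s \<le> (n - 1) div 2"
  shows "ratfun_cong
    (\<Sum>k=0..(n - 1) div 2.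
       (qpoch (fa * fq) (fq ^ 2) k * qpoch (fq / fa) (fq ^ 2) (k + s)) /
       (qpoch (fq ^ 2) (fq ^ 2) k * qpoch (fq ^ 2) (fq ^ 2) (k + s)))
    ((-1) ^ ((n - 1) div 2) * fq powi ((1 - int n ^ 2) div 4))
    ((1 - var_a * var_q ^ n) * (var_a - var_q ^ n))"
proof -
  define m where "m = (n - 1) div 2"
  have n: "n = 2 * m + 1"
    using assms(1) by (simp add: m_def)
  have exponent: "(1 - int n ^ 2) div 4 = - int (m * (m + 1))"
    unfolding n by (simp add: power2_eq_square algebra_simps)
  have s: "s \<le> m"
    using assms(3) by (simp add: m_def)
  show ?thesis
    unfolding q_summand_def[symmetric] m_def[symmetric] exponent
    by (rule ratfun_cong_if_has_value_0[OF assms(2)];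
        rule has_value_0_at_root[of _ m s, folded n]; simp add: s)
qed

end
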